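(* In the standing setting, fix $T>0$ and $|\xi|=1$. For all disjoint subsets $F,H\subset\mathbb N$ with $F$ finite and nonempty, $\delta^F_\xi\phi^H_T$ solves weakly in $\mathbb R^d$ $$\tfrac1T\delta^F_\xi\phi^H_T-\nabla\cdot A^{F\cup H}\nabla\delta^F_\xi\phi^H_T=\sum_{S\subset F}(-1)^{|S|+1}\nabla\cdot C_{S\|H\cup(F\setminus S)}\nabla\delta^{F\setminus S}_\xi\phi^H_T,$$ $$\tfrac1T\delta^F_\xi\phi^H_T-\nabla\cdot A^{H}\nabla\delta^F_\xi\phi^H_T=\sum_{S\subset F}(-1)^{|S|+1}\nabla\cdot C_{S\|H}\nabla\delta^{F\setminus S}_\xi\phi^{S\cup H}_T.$$ More generally, for all pairwise disjoint $F,G,H\subset\mathbb N$ with $F,G$ finite and $F\cup G\ne\varnothing$, $\delta^{F\cup G}_\xi\phi^H_T$ solves weakly in $\mathbb R^d$ $$\tfrac1T\delta^{F\cup G}_\xi\phi^H_T-\nabla\cdot A^{F\cup H}\nabla\delta^{F\cup G}_\xi\phi^H_T=\sum_{S\subset F}\sum_{U\subset G}(-1)^{|S|+|U|+1}\nabla\cdot C_{S\cup U\|H\cup(F\setminus S)}\nabla\delta_\xi^{(F\setminus S)\cup(G\setminus U)}\phi^{U\cup H}_T.$$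
   Context: Standing setting. $A,A'$ are $\mathbb R^{d\times d}$-valued (symmetric, uniformly elliptic) coefficient fields on $\mathbb R^d$, $(J_n)_{n\in\mathbb N}$ bounded Borel inclusions with at most $\Gamma$ of them containing any given point. For $E\subset\mathbb N$: $J^E=\bigcup_{n\in E}J_n$, $C^E=(A'-A)\mathbb 1_{J^E}$, $A^E=A+C^E$. For nonempty $E$ and any $F$: $J_{E\|F}=(\bigcap_{n\in E}J_n)\setminus\bigcup_{n\in F}J_n$, $C_{E\|F}=(A'-A)\mathbb 1_{J_{E\|F}}$, $C_E=C_{E\|\varnothing}$; by convention $C_{\varnothing\|F}=C_\varnothing=0$. For fixed $\xi$ and $T>0$, $\phi^E_T$ is the unique solution in $\{v\in H^1_{loc}(\mathbb R^d):\sup_z\int_{B_1(z)}(v^2+|\nabla v|^2)<\infty\}$ of $\frac1T\phi^E_T-\nabla\cdot A^E(\nabla\phi^E_T+\xi)=0$. Difference operators: for finite $F$ and any $H$, $\delta^F_\xi\phi^H_T=\sum_{G\subset F}(-1)^{|F\setminus G|}(\phi^{G\cup H}_T+\xi\cdot x)$, so $\nabla\delta^F_\xi\phi^H_T=\sum_{G\subset F}(-1)^{|F\setminus G|}(\nabla\phi^{G\cup H}_T+\xi)$; in particular $\nabla\delta^\varnothing_\xi\phi^H_T=\nabla\phi^H_T+\xi$. *)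

theory Defs
  imports "HOL-Analysis.Analysis"
begin

text \<open>Space R^d is modelled as real^'n for a finite index type 'n (d = CARD('n)).
  Coefficient fields are matrix-valued functions real^'n => real^'n^'n.\<close>

definition test_fn :: "(real^'n \<Rightarrow> real) \<Rightarrow> (real^'n \<Rightarrow> real^'n) \<Rightarrow> bool" where
  "test_fn \<psi> g \<longleftrightarrow>
     (\<forall>x. (\<psi> has_derivative (\<lambda>h. g x \<bullet> h)) (at x)) \<and> continuous_on UNIV g \<and>
     compact (closure {x. \<psi> x \<noteq> 0})"

definition weak_grad :: "(real^'n \<Rightarrow> real) \<Rightarrow> (real^'n \<Rightarrow> real^'n) \<Rightarrow> bool" where
  "weak_grad v G \<longleftrightarrow>
     (\<forall>\<psi> g. test_fn \<psi> g \<longrightarrow> (\<forall>i.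
        integrable lborel (\<lambda>x. v x * g x $ i) \<and> integrable lborel (\<lambda>x. G x $ i * \<psi> x) \<and>
        (\<integral>x. v x * g x $ i \<partial>lborel) = - (\<integral>x. G x $ i * \<psi> x \<partial>lborel)))"

definition H1_uloc :: "(real^'n \<Rightarrow> real) \<Rightarrow> (real^'n \<Rightarrow> real^'n) \<Rightarrow> bool" where
  "H1_uloc v G \<longleftrightarrow>
     v \<in> borel_measurable lborel \<and> G \<in> borel_measurable lborel \<and> weak_grad v G \<and>
     (\<exists>M. \<forall>z. set_integrable lborel (ball z 1) (\<lambda>x. (v x)\<^sup>2 + (norm (G x))\<^sup>2) \<and>
              (LINT x:ball z 1|lborel. (v x)\<^sup>2 + (norm (G x))\<^sup>2) \<le> M)"

text \<open>Weak formulation of  (1/T) u - div q = div f  in R^d.\<close>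
definition weak_sol :: "real \<Rightarrow> (real^'n \<Rightarrow> real) \<Rightarrow> (real^'n \<Rightarrow> real^'n) \<Rightarrow> (real^'n \<Rightarrow> real^'n) \<Rightarrow> bool" where
  "weak_sol T u q f \<longleftrightarrow>
     (\<forall>\<psi> g. test_fn \<psi> g \<longrightarrow>
        integrable lborel (\<lambda>x. u x * \<psi> x) \<and> integrable lborel (\<lambda>x. q x \<bullet> g x) \<and>
        integrable lborel (\<lambda>x. f x \<bullet> g x) \<and>
        (1 / T) * (\<integral>x. u x * \<psi> x \<partial>lborel) + (\<integral>x. q x \<bullet> g x \<partial>lborel)
          = - (\<integral>x. f x \<bullet> g x \<partial>lborel))"

definition sym_unif_elliptic :: "(real^'n \<Rightarrow> real^'n^'n) \<Rightarrow> bool" where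
  "sym_unif_elliptic A \<longleftrightarrow>
     (\<forall>i j. (\<lambda>x. A x $ i $ j) \<in> borel_measurable lborel) \<and>
     (\<forall>x. transpose (A x) = A x) \<and>
     (\<exists>c>0. \<forall>x v. c * (norm v)\<^sup>2 \<le> v \<bullet> (A x *v v) \<and> norm (A x *v v) \<le> norm v / c)"

definition JU :: "(nat \<Rightarrow> (real^'n) set) \<Rightarrow> nat set \<Rightarrow> (real^'n) set" where
  "JU J E = (\<Union>n\<in>E. J n)"

definition CU :: "(real^'n \<Rightarrow> real^'n^'n) \<Rightarrow> (real^'n \<Rightarrow> real^'n^'n) \<Rightarrow> (nat \<Rightarrow> (real^'n) set)
     \<Rightarrow> nat set \<Rightarrow> real^'n \<Rightarrow> real^'n^'n" where
  "CU A A' J E x = (if x \<in> JU J E then A' x - A x else 0)"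

definition AU :: "(real^'n \<Rightarrow> real^'n^'n) \<Rightarrow> (real^'n \<Rightarrow> real^'n^'n) \<Rightarrow> (nat \<Rightarrow> (real^'n) set)
     \<Rightarrow> nat set \<Rightarrow> real^'n \<Rightarrow> real^'n^'n" where
  "AU A A' J E x = A x + CU A A' J E x"

definition Jsep :: "(nat \<Rightarrow> (real^'n) set) \<Rightarrow> nat set \<Rightarrow> nat set \<Rightarrow> (real^'n) set" where
  "Jsep J E F = (\<Inter>n\<in>E. J n) - (\<Union>n\<in>F. J n)"

definition Csep :: "(real^'n \<Rightarrow> real^'n^'n) \<Rightarrow> (real^'n \<Rightarrow> real^'n^'n) \<Rightarrow> (nat \<Rightarrow> (real^'n) set)
     \<Rightarrow> nat set \<Rightarrow> nat set \<Rightarrow> real^'n \<Rightarrow> real^'n^'n" where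
  "Csep A A' J E F x = (if E \<noteq> {} \<and> x \<in> Jsep J E F then A' x - A x else 0)"

definition delta :: "(nat set \<Rightarrow> real^'n \<Rightarrow> real) \<Rightarrow> real^'n \<Rightarrow> nat set \<Rightarrow> nat set \<Rightarrow> real^'n \<Rightarrow> real" where
  "delta phi \<xi> F H x = (\<Sum>G\<in>Pow F. (-1) ^ card (F - G) * (phi (G \<union> H) x + \<xi> \<bullet> x))"

definition gdelta :: "(nat set \<Rightarrow> real^'n \<Rightarrow> real^'n) \<Rightarrow> real^'n \<Rightarrow> nat set \<Rightarrow> nat set \<Rightarrow> real^'n \<Rightarrow> real^'n" where
  "gdelta Dphi \<xi> F H x = (\<Sum>G\<in>Pow F. ((-1) ^ card (F - G)) *\<^sub>R (Dphi (G \<union> H) x + \<xi>))"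

end

theory Submission
  imports Defs
begin

text \<open>Both sides of every equation are linear in the family \<phi>^E, so \<delta>^F_\<xi> \<phi>^H solves the
  alternating sum of the equations for the \<phi>^(W \<union> H), W \<subseteq> F; the affine parts \<xi> \<cdot> x cancel
  because an alternating sum over the subsets of a nonempty set vanishes. What remains is a
  pointwise identity for the fluxes. At a point x let K be the set of inclusions containing x, so
  that A^E(x) = A(x) + [E \<inter> K \<noteq> {}] (A' - A)(x). A Leibniz-type rule for the finite difference
  of W \<mapsto> [W \<inter> K \<noteq> {}] v(W) splits it into the difference of v, taken with the coefficient
  A^(F \<union> H), plus correction terms whose coefficients are exactly the C_(S \<union> U \<parallel> H \<union> (F - S)).
  Moving these to the right-hand side is legitimate because the C are bounded and measurable and
  the gradients are locally integrable.\<close>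

text \<open>\<open>fin_diff v F H\<close> is the paper's \<delta>^F applied to E \<mapsto> v E and evaluated at H.\<close>
definition fin_diff :: "('b set \<Rightarrow> 'a::real_vector) \<Rightarrow> 'b set \<Rightarrow> 'b set \<Rightarrow> 'a" where
  "fin_diff v P Q = (\<Sum>W\<in>Pow P. (-1) ^ card (P - W) *\<^sub>R v (W \<union> Q))"

lemma sum_Pow_insert:
  assumes "finite X" "r \<notin> X"
  shows "(\<Sum>W\<in>Pow (insert r X). f W) = (\<Sum>W\<in>Pow X. f W) + (\<Sum>W\<in>Pow X. f (insert r W))"
proof -
  have "inj_on (insert r) (Pow X)"
    using assms(2) by (intro inj_onI) (metis Diff_insert_absorb PowD in_mono)
  moreover have "Pow X \<inter> insert r ` Pow X = {}" using assms(2) by auto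
  ultimately show ?thesis
    unfolding Pow_insert using assms(1) by (simp add: sum.union_disjoint sum.reindex)
qed

lemma fin_diff_insert:
  assumes "finite P" "r \<notin> P"
  shows "fin_diff v (insert r P) Q = fin_diff v P (insert r Q) - fin_diff v P Q"
proof -
  have "card (insert r P - W) = Suc (card (P - W))" "insert r P - insert r W = P - W"
    "insert r W \<union> Q = W \<union> insert r Q" if "W \<in> Pow P" for W
    using that assms by (auto simp: insert_Diff_if)
  then show ?thesis
    unfolding fin_diff_def sum_Pow_insert[OF assms] sum_negf[symmetric]
    by (simp add: sum.distrib[symmetric] sum_subtractf[symmetric])
qed

lemma fin_diff_const:
  assumes "finite P" "P \<noteq> {}"
  shows "fin_diff (\<lambda>_. c) P Q = 0"
proof -
  obtain r P' where "P = insert r P'" "r \<notin> P'" "finite P'"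
    using assms by (metis finite_insert insert_Diff mk_disjoint_insert ex_in_conv)
  then show ?thesis
    using fin_diff_insert[of P' r "\<lambda>_. c"] by (simp add: fin_diff_def)
qed

lemma fin_diff_add: "fin_diff (\<lambda>W. v W + w W) P Q = fin_diff v P Q + fin_diff w P Q"
  unfolding fin_diff_def by (simp add: scaleR_add_right sum.distrib)

lemma fin_diff_linear:
  assumes "linear f"
  shows "fin_diff (\<lambda>W. f (v W)) P Q = f (fin_diff v P Q)"
  unfolding fin_diff_def by (simp add: linear_sum[OF assms] linear_scale[OF assms])

lemma fin_diff_avoiding:
  assumes "finite P"
  shows "fin_diff (\<lambda>W. if W \<inter> K = {} then v W else 0) P Q
    = (if Q \<inter> K = {} then (-1) ^ card (P \<inter> K) *\<^sub>R fin_diff v (P - K) Q else 0)"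
proof (cases "Q \<inter> K = {}")
  case True
  have card: "card (P - W) = card (P \<inter> K) + card (P - K - W)" if "W \<subseteq> P - K" for W
  proof -
    have "P - W = (P \<inter> K) \<union> (P - K - W)" using that by auto
    then show ?thesis using assms by (simp add: card_Un_disjoint disjoint_iff)
  qed
  have "fin_diff (\<lambda>W. if W \<inter> K = {} then v W else 0) P Q
      = (\<Sum>W\<in>Pow P. if W \<subseteq> P - K then (-1) ^ card (P - W) *\<^sub>R v (W \<union> Q) else 0)"
    unfolding fin_diff_def using True by (intro sum.cong) auto
  also have "\<dots> = (\<Sum>W\<in>Pow (P - K). (-1) ^ card (P - W) *\<^sub>R v (W \<union> Q))"
    using assms by (subst sum.inter_filter[symmetric]) (auto intro: sum.cong)
  also have "\<dots> = (-1) ^ card (P \<inter> K) *\<^sub>R fin_diff v (P - K) Q"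
    unfolding fin_diff_def scaleR_sum_right by (intro sum.cong) (auto simp: card power_add)
  finally show ?thesis using True by simp
next
  case False
  then show ?thesis unfolding fin_diff_def by (auto intro!: sum.neutral split: if_splits)
qed

lemma fin_diff_hitting:
  assumes "finite P" "Q \<inter> K = {}"
  shows "fin_diff (\<lambda>W. if W \<inter> K \<noteq> {} then v W else 0) P Q
    = fin_diff v P Q - (-1) ^ card (P \<inter> K) *\<^sub>R fin_diff v (P - K) Q"
proof -
  have "fin_diff v P Q = fin_diff (\<lambda>W. if W \<inter> K \<noteq> {} then v W else 0) P Q
      + fin_diff (\<lambda>W. if W \<inter> K = {} then v W else 0) P Q"
    unfolding fin_diff_add[symmetric] by (rule arg_cong[where f="\<lambda>v. fin_diff v P Q"]) auto
  then show ?thesis using assms by (simp add: fin_diff_avoiding)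
qed

lemma fin_diff_alternating_split:
  assumes "finite R" "finite P" "P \<inter> R = {}"
  shows "(\<Sum>U\<in>Pow R. (-1) ^ card U *\<^sub>R fin_diff v (P \<union> (R - U)) (U \<union> Q))
    = (-1) ^ card R *\<^sub>R fin_diff v P Q"
  using assms(1,3)
proof (induction R rule: finite_induct)
  case (insert r R)
  have "(-1) ^ card U *\<^sub>R fin_diff v (P \<union> (insert r R - U)) (U \<union> Q)
      + (-1) ^ card (insert r U) *\<^sub>R fin_diff v (P \<union> (insert r R - insert r U)) (insert r U \<union> Q)
      = - ((-1) ^ card U *\<^sub>R fin_diff v (P \<union> (R - U)) (U \<union> Q))" if "U \<in> Pow R" for U
  proof -
    have "P \<union> (insert r R - U) = insert r (P \<union> (R - U))" "P \<union> (insert r R - insert r U) = P \<union> (R - U)"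
      "insert r U \<union> Q = insert r (U \<union> Q)" "card (insert r U) = Suc (card U)"
      using that insert by (auto simp: card_insert_if finite_subset)
    moreover have "r \<notin> P \<union> (R - U)" "finite (P \<union> (R - U))" using insert assms(2) by auto
    ultimately show ?thesis by (simp add: fin_diff_insert algebra_simps)
  qed
  then show ?case
    using insert by (simp add: sum_Pow_insert sum.distrib[symmetric] sum_negf)
qed simp

lemma sum_switched_terms:
  fixes X :: "'b set \<Rightarrow> 'b set \<Rightarrow> 'a::real_vector"
  assumes "finite F" "finite G" "H \<inter> K = {}"
  shows "(\<Sum>S\<in>Pow F. \<Sum>U\<in>Pow G. c S U *\<^sub>R
            (if S \<union> U \<noteq> {} \<and> S \<union> U \<subseteq> K \<and> (H \<union> (F - S)) \<inter> K = {} then X S U else 0))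
    = (\<Sum>U\<in>Pow (G \<inter> K). c (F \<inter> K) U *\<^sub>R (if (F \<inter> K) \<union> U \<noteq> {} then X (F \<inter> K) U else 0))"
proof -
  have "(\<Sum>U\<in>Pow G. c S U *\<^sub>R
            (if S \<union> U \<noteq> {} \<and> S \<union> U \<subseteq> K \<and> (H \<union> (F - S)) \<inter> K = {} then X S U else 0))
      = (if S = F \<inter> K then \<Sum>U\<in>Pow (G \<inter> K). c S U *\<^sub>R (if S \<union> U \<noteq> {} then X S U else 0) else 0)"
    if "S \<in> Pow F" for S
  proof (cases "S = F \<inter> K")
    case True
    have "S \<union> U \<noteq> {} \<and> S \<union> U \<subseteq> K \<and> (H \<union> (F - S)) \<inter> K = {} \<longleftrightarrow> S \<union> U \<noteq> {} \<and> U \<subseteq> G \<inter> K"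
      if "U \<subseteq> G" for U
      using True assms(3) that by auto
    then have "(\<Sum>U\<in>Pow G. c S U *\<^sub>R
            (if S \<union> U \<noteq> {} \<and> S \<union> U \<subseteq> K \<and> (H \<union> (F - S)) \<inter> K = {} then X S U else 0))
      = (\<Sum>U\<in>Pow G. c S U *\<^sub>R (if S \<union> U \<noteq> {} \<and> U \<subseteq> G \<inter> K then X S U else 0))"
      by (intro sum.cong) auto
    also have "\<dots> = (\<Sum>U\<in>Pow (G \<inter> K). c S U *\<^sub>R (if S \<union> U \<noteq> {} then X S U else 0))"
      using assms(2) by (intro sum.mono_neutral_cong_right) auto
    finally show ?thesis using True by simp
  next
    case False
    then have "\<not> (S \<union> U \<noteq> {} \<and> S \<union> U \<subseteq> K \<and> (H \<union> (F - S)) \<inter> K = {})" for U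
      using that by auto
    then show ?thesis using False by (simp only: if_False scaleR_zero_right sum.neutral_const)
  qed
  then show ?thesis
    using assms by (simp add: sum.delta)
qed

lemma fin_diff_indicator_expansion:
  fixes w :: "'b set \<Rightarrow> 'a::real_vector"
  assumes fin: "finite F" "finite G" and disj: "F \<inter> G = {}" "F \<inter> H = {}" "G \<inter> H = {}"
  shows "fin_diff (\<lambda>W. if W \<inter> K \<noteq> {} then w W else 0) (F \<union> G) H
    = (if (F \<union> H) \<inter> K \<noteq> {} then fin_diff w (F \<union> G) H else 0)
      + (\<Sum>S\<in>Pow F. \<Sum>U\<in>Pow G. (-1) ^ (card S + card U + 1) *\<^sub>R
          (if S \<union> U \<noteq> {} \<and> S \<union> U \<subseteq> K \<and> (H \<union> (F - S)) \<inter> K = {}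
           then fin_diff w ((F - S) \<union> (G - U)) (U \<union> H) else 0))"
proof (cases "H \<inter> K = {}")
  case False
  then have "\<not> (S \<union> U \<noteq> {} \<and> S \<union> U \<subseteq> K \<and> (H \<union> (F - S)) \<inter> K = {})" for S U :: "'b set"
    by auto
  then have "(\<Sum>S\<in>Pow F. \<Sum>U\<in>Pow G. (-1) ^ (card S + card U + 1) *\<^sub>R
          (if S \<union> U \<noteq> {} \<and> S \<union> U \<subseteq> K \<and> (H \<union> (F - S)) \<inter> K = {}
           then fin_diff w ((F - S) \<union> (G - U)) (U \<union> H) else 0)) = 0"
    by (simp only: if_False scaleR_zero_right sum.neutral_const)
  moreover have "fin_diff (\<lambda>W. if W \<inter> K \<noteq> {} then w W else 0) (F \<union> G) H = fin_diff w (F \<union> G) H"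
    unfolding fin_diff_def using False by (intro sum.cong) auto
  ultimately show ?thesis using False by auto
next
  case True
  define S0 U0 P0 where "S0 = F \<inter> K" and "U0 = G \<inter> K" and "P0 = (F \<union> G) - K"
  have fin0: "finite S0" "finite U0" "finite P0" "P0 \<inter> U0 = {}"
    using fin unfolding S0_def U0_def P0_def by auto
  have "card ((F \<union> G) \<inter> K) = card S0 + card U0"
    using fin disj unfolding S0_def U0_def by (subst card_Un_disjoint[symmetric]) (auto intro: arg_cong[where f=card])
  then have lhs: "fin_diff (\<lambda>W. if W \<inter> K \<noteq> {} then w W else 0) (F \<union> G) H
      = fin_diff w (F \<union> G) H - (-1) ^ (card S0 + card U0) *\<^sub>R fin_diff w P0 H"
    using fin True by (simp add: fin_diff_hitting P0_def)
  define X where "X U = fin_diff w (P0 \<union> (U0 - U)) (U \<union> H)" for U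
  have "(F - S0) \<union> (G - U) = P0 \<union> (U0 - U)" if "U \<subseteq> U0" for U
    using that disj unfolding S0_def U0_def P0_def by auto
  then have "(\<Sum>S\<in>Pow F. \<Sum>U\<in>Pow G. (-1) ^ (card S + card U + 1) *\<^sub>R
          (if S \<union> U \<noteq> {} \<and> S \<union> U \<subseteq> K \<and> (H \<union> (F - S)) \<inter> K = {}
           then fin_diff w ((F - S) \<union> (G - U)) (U \<union> H) else 0))
      = (\<Sum>U\<in>Pow U0. (-1) ^ (card S0 + card U + 1) *\<^sub>R (if S0 \<union> U \<noteq> {} then X U else 0))"
    using fin True unfolding sum_switched_terms[OF fin True] S0_def U0_def X_def
    by (intro sum.cong) auto
  also have "\<dots> = - ((-1) ^ card S0) *\<^sub>R ((\<Sum>U\<in>Pow U0. (-1) ^ card U *\<^sub>R X U)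
      - (if S0 = {} then X {} else 0))"
    using fin0 by (simp add: sum.remove[of "Pow U0" "{}"] scaleR_sum_right power_add sum_negf scaleR_add_right)
  also have "\<dots> = - ((-1) ^ (card S0 + card U0)) *\<^sub>R fin_diff w P0 H
      + (if S0 = {} then fin_diff w (F \<union> G) H else 0)"
  proof -
    have "P0 \<union> U0 = F \<union> G" if "S0 = {}" using that unfolding S0_def U0_def P0_def by auto
    then show ?thesis
      using fin0 by (simp add: X_def fin_diff_alternating_split power_add)
  qed
  moreover have "(F \<union> H) \<inter> K = S0" using True unfolding S0_def by auto
  ultimately show ?thesis by (simp add: lhs)
qed

lemma test_fn_grad_vanishes:
  assumes "test_fn \<psi> g" "x \<notin> closure {x. \<psi> x \<noteq> 0}"
  shows "g x = 0"
proof -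
  have "(\<psi> has_derivative (\<lambda>h. g x \<bullet> h)) (at x)" using assms(1) unfolding test_fn_def by auto
  then have "((\<lambda>_. 0::real) has_derivative (\<lambda>h. g x \<bullet> h)) (at x)"
  proof (rule has_derivative_transform_within_open)
    show "\<psi> y = 0" if "y \<in> - closure {x. \<psi> x \<noteq> 0}" for y
      using that closure_subset[of "{x. \<psi> x \<noteq> 0}"] by auto
  qed (use assms(2) in auto)
  moreover have "((\<lambda>_. 0::real) has_derivative (\<lambda>h. 0)) (at x)" by simp
  ultimately have "(\<lambda>h. g x \<bullet> h) = (\<lambda>h. 0)" by (rule has_derivative_unique)
  then have "g x \<bullet> g x = 0" by metis
  then show ?thesis by simp
qed

lemma test_fn_grad_bounded:
  assumes "test_fn \<psi> g"
  obtains B where "\<And>x. norm (g x) \<le> B"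
proof -
  let ?K = "closure {x. \<psi> x \<noteq> 0}"
  have "compact (g ` ?K)"
    using assms unfolding test_fn_def by (metis compact_continuous_image continuous_on_subset subset_UNIV)
  then obtain B where "\<forall>y\<in>g ` ?K. norm y \<le> B" using compact_imp_bounded bounded_iff by metis
  then have "norm (g x) \<le> max B 0" for x
    using test_fn_grad_vanishes[OF assms, of x] by (cases "x \<in> ?K") auto
  then show ?thesis using that by blast
qed

definition locally_integrable :: "('a::euclidean_space \<Rightarrow> 'b::{banach, second_countable_topology}) \<Rightarrow> bool" where
  "locally_integrable w \<longleftrightarrow> (\<forall>K. compact K \<longrightarrow> set_integrable lborel K w)"

lemma locally_integrable_const: "locally_integrable (\<lambda>_. c)"
  unfolding locally_integrable_def set_integrable_def by (auto intro: borel_integrable_compact)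

lemma locally_integrable_add:
  "locally_integrable v \<Longrightarrow> locally_integrable w \<Longrightarrow> locally_integrable (\<lambda>x. v x + w x)"
  unfolding locally_integrable_def set_integrable_def by (simp add: scaleR_add_right)

lemma locally_integrable_sum:
  fixes w :: "'i \<Rightarrow> 'a::euclidean_space \<Rightarrow> 'b::{banach, second_countable_topology}"
  assumes "\<And>i. i \<in> I \<Longrightarrow> locally_integrable (w i)"
  shows "locally_integrable (\<lambda>x. \<Sum>i\<in>I. c i *\<^sub>R w i x)"
  unfolding locally_integrable_def set_integrable_def
proof (intro allI impI)
  fix K :: "'a set"
  assume "compact K"
  then have "integrable lborel (\<lambda>x. indicator K x *\<^sub>R w i x)" if "i \<in> I" for i
    using assms that unfolding locally_integrable_def set_integrable_def by blast
  then have "integrable lborel (\<lambda>x. \<Sum>i\<in>I. c i *\<^sub>R (indicator K x *\<^sub>R w i x))"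
    by (intro Bochner_Integration.integrable_sum integrable_scaleR_right) blast
  then show "integrable lborel (\<lambda>x. indicator K x *\<^sub>R (\<Sum>i\<in>I. c i *\<^sub>R w i x))"
    by (simp add: scaleR_sum_right mult.commute)
qed

lemma H1_uloc_locally_integrable:
  fixes D :: "real^'n \<Rightarrow> real^'n"
  assumes "H1_uloc p D"
  shows "locally_integrable D"
  unfolding locally_integrable_def
proof (intro allI impI)
  fix K :: "(real^'n) set"
  assume "compact K"
  moreover have "K \<subseteq> (\<Union>z\<in>K. ball z 1)" by force
  ultimately obtain Z where Z: "finite Z" "K \<subseteq> (\<Union>z\<in>Z. ball z 1)"
    by (metis compactE_image open_ball)
  have D: "D \<in> borel_measurable lborel"
    and sq: "\<And>z. set_integrable lborel (ball z 1) (\<lambda>x. (p x)\<^sup>2 + (norm (D x))\<^sup>2)"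
    using assms unfolding H1_uloc_def by blast+
  have ball: "set_integrable lborel (ball z 1) D" for z
  proof (rule set_integrable_bound)
    have "set_integrable lborel (cball z 1) (\<lambda>_. 1::real)"
      using locally_integrable_const compact_cball unfolding locally_integrable_def by blast
    then have "set_integrable lborel (ball z 1) (\<lambda>_. 1::real)"
      by (rule set_integrable_subset) auto
    then show "set_integrable lborel (ball z 1) (\<lambda>x. 1 + ((p x)\<^sup>2 + (norm (D x))\<^sup>2))"
      using sq[of z] by (rule set_integral_add(1))
    show "set_borel_measurable lborel (ball z 1) D"
      using D unfolding set_borel_measurable_def by (intro borel_measurable_scaleR borel_measurable_indicator) auto
    have "norm (D x) \<le> 1 + (norm (D x))\<^sup>2" for x
    proof -
      have "0 \<le> (norm (D x) - 1)\<^sup>2" by simp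
      then have "2 * norm (D x) \<le> (norm (D x))\<^sup>2 + 1" unfolding power2_diff by simp
      then show ?thesis using norm_ge_zero[of "D x"] by linarith
    qed
    moreover have "0 \<le> (p x)\<^sup>2" for x by simp
    ultimately show "AE x in lborel. x \<in> ball z 1 \<longrightarrow> norm (D x) \<le> norm (1 + ((p x)\<^sup>2 + (norm (D x))\<^sup>2))"
      by (intro AE_I2) (smt (verit) real_norm_def)
  qed
  have "set_integrable lborel (\<Union>z\<in>Z. ball z 1) D"
    using Z(1) ball by (intro set_integrable_UN) auto
  moreover have "K \<in> sets lborel" using \<open>compact K\<close> by (simp add: borel_compact)
  ultimately show "set_integrable lborel K D" using Z(2) by (rule set_integrable_subset)
qed

definition bounded_coeff :: "(real^'n \<Rightarrow> real^'n^'n) \<Rightarrow> bool" where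
  "bounded_coeff M \<longleftrightarrow> (\<forall>i j. (\<lambda>x. M x $ i $ j) \<in> borel_measurable lborel) \<and>
     (\<exists>B. \<forall>x v. norm (M x *v v) \<le> B * norm v)"

lemma Jsep_in_sets_lborel:
  assumes "\<And>n. J n \<in> sets borel" "E \<noteq> {}"
  shows "Jsep J E L \<in> sets lborel"
  unfolding Jsep_def sets_lborel
  using assms by (intro sets.Diff sets.countable_INT' sets.countable_UN') auto

lemma bounded_coeff_Csep:
  assumes A: "sym_unif_elliptic A" and A': "sym_unif_elliptic A'" and J: "\<And>n. J n \<in> sets borel"
  shows "bounded_coeff (Csep A A' J E L)"
proof -
  obtain c c' where c: "c > 0" "\<And>x v. norm (A x *v v) \<le> norm v / c"
    and c': "c' > 0" "\<And>x v. norm (A' x *v v) \<le> norm v / c'"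
    using A A' unfolding sym_unif_elliptic_def by metis
  have "norm (Csep A A' J E L x *v v) \<le> (1 / c' + 1 / c) * norm v" for x v
  proof -
    have "norm ((A' x - A x) *v v) \<le> norm (A' x *v v) + norm (A x *v v)"
      by (simp add: matrix_vector_mult_diff_rdistrib norm_triangle_ineq4)
    also have "\<dots> \<le> (1 / c' + 1 / c) * norm v"
      using c(2)[of x v] c'(2)[of x v] by (simp add: algebra_simps)
    finally show ?thesis
      using c c' unfolding Csep_def by auto
  qed
  moreover have "(\<lambda>x. Csep A A' J E L x $ i $ j) \<in> borel_measurable lborel" for i j
  proof (cases "E = {}")
    case False
    have "(\<lambda>x. A x $ i $ j) \<in> borel_measurable lborel" "(\<lambda>x. A' x $ i $ j) \<in> borel_measurable lborel"
      using A A' unfolding sym_unif_elliptic_def by auto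
    then have "(\<lambda>x. if x \<in> Jsep J E L then A' x $ i $ j - A x $ i $ j else 0) \<in> borel_measurable lborel"
      using Jsep_in_sets_lborel[OF J False] by (intro measurable_If_set) auto
    moreover have "(\<lambda>x. Csep A A' J E L x $ i $ j) = (\<lambda>x. if x \<in> Jsep J E L then A' x $ i $ j - A x $ i $ j else 0)"
      unfolding Csep_def using False by auto
    ultimately show ?thesis by simp
  qed (simp add: Csep_def)
  ultimately show ?thesis unfolding bounded_coeff_def by blast
qed

lemma integrable_flux_test:
  assumes M: "bounded_coeff M" and w: "locally_integrable w" and tf: "test_fn \<psi> g"
  shows "integrable lborel (\<lambda>x. (M x *v w x) \<bullet> g x)"
proof -
  define K where "K = closure {x. \<psi> x \<noteq> 0}"
  define w' where "w' x = indicator K x *\<^sub>R w x" for x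
  have "compact K" and g: "continuous_on UNIV g" using tf unfolding test_fn_def K_def by auto
  then have w': "integrable lborel w'" using w unfolding locally_integrable_def set_integrable_def w'_def by blast
  obtain B where B: "\<And>x v. norm (M x *v v) \<le> B * norm v" using M unfolding bounded_coeff_def by blast
  obtain G where G: "\<And>x. norm (g x) \<le> G" using test_fn_grad_bounded[OF tf] by blast
  have "(M x *v w x) \<bullet> g x = (M x *v w' x) \<bullet> g x" for x
    using test_fn_grad_vanishes[OF tf, of x, folded K_def] unfolding w'_def by (cases "x \<in> K") auto
  moreover have "integrable lborel (\<lambda>x. (M x *v w' x) \<bullet> g x)"
  proof (rule Bochner_Integration.integrable_bound)
    show "integrable lborel (\<lambda>x. B * G * norm (w' x))" using w' by simp
    have "(M x *v w' x) \<bullet> g x = (\<Sum>i\<in>UNIV. \<Sum>j\<in>UNIV. M x $ i $ j * w' x $ j * g x $ i)" for x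
      unfolding inner_vec_def matrix_vector_mult_def inner_real_def by (simp add: sum_distrib_right)
    moreover have "(\<lambda>x. w' x $ j) \<in> borel_measurable lborel" "(\<lambda>x. g x $ i) \<in> borel_measurable lborel"
      for i j
      using borel_measurable_integrable[OF w'] borel_measurable_continuous_onI[OF g]
      by (auto intro: measurable_compose[OF _ borel_measurable_nth])
    ultimately show "(\<lambda>x. (M x *v w' x) \<bullet> g x) \<in> borel_measurable lborel"
      using M unfolding bounded_coeff_def by (simp add: borel_measurable_sum borel_measurable_times)
    have "norm ((M x *v w' x) \<bullet> g x) \<le> norm (M x *v w' x) * norm (g x)" for x
      using Cauchy_Schwarz_ineq2 by simp
    also have "\<dots> x \<le> B * norm (w' x) * G" for x
      using B[of x "w' x"] G[of x] by (intro mult_mono) (auto intro: order_trans[OF norm_ge_zero])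
    also have "\<dots> x \<le> norm (B * G * norm (w' x))" for x
      by (simp add: mult_ac)
    finally show "AE x in lborel. norm ((M x *v w' x) \<bullet> g x) \<le> norm (B * G * norm (w' x))"
      by simp
  qed
  ultimately show ?thesis by simp
qed

lemma weak_sol_lincomb:
  fixes u :: "'i \<Rightarrow> real^'n \<Rightarrow> real" and q :: "'i \<Rightarrow> real^'n \<Rightarrow> real^'n"
  assumes "finite I" and sol: "\<And>i. i \<in> I \<Longrightarrow> weak_sol T (u i) (q i) (\<lambda>x. 0)"
  shows "weak_sol T (\<lambda>x. \<Sum>i\<in>I. c i * u i x) (\<lambda>x. \<Sum>i\<in>I. c i *\<^sub>R q i x) (\<lambda>x. 0)"
  unfolding weak_sol_def
proof (intro allI impI)
  fix \<psi> :: "real^'n \<Rightarrow> real" and g :: "real^'n \<Rightarrow> real^'n"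
  assume "test_fn \<psi> g"
  then have int_u: "\<And>i. i \<in> I \<Longrightarrow> integrable lborel (\<lambda>x. u i x * \<psi> x)"
    and int_q: "\<And>i. i \<in> I \<Longrightarrow> integrable lborel (\<lambda>x. q i x \<bullet> g x)"
    and eq: "\<And>i. i \<in> I \<Longrightarrow> 1 / T * (\<integral>x. u i x * \<psi> x \<partial>lborel) + (\<integral>x. q i x \<bullet> g x \<partial>lborel) = 0"
    using sol unfolding weak_sol_def by auto
  have ru: "(\<lambda>x. (\<Sum>i\<in>I. c i * u i x) * \<psi> x) = (\<lambda>x. \<Sum>i\<in>I. c i * (u i x * \<psi> x))"
    by (simp add: sum_distrib_right mult.assoc)
  have rq: "(\<lambda>x. (\<Sum>i\<in>I. c i *\<^sub>R q i x) \<bullet> g x) = (\<lambda>x. \<Sum>i\<in>I. c i * (q i x \<bullet> g x))"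
    by (simp add: inner_sum_left)
  have "1 / T * (\<integral>x. (\<Sum>i\<in>I. c i * u i x) * \<psi> x \<partial>lborel) + (\<integral>x. (\<Sum>i\<in>I. c i *\<^sub>R q i x) \<bullet> g x \<partial>lborel)
      = (\<Sum>i\<in>I. c i * (1 / T * (\<integral>x. u i x * \<psi> x \<partial>lborel) + (\<integral>x. q i x \<bullet> g x \<partial>lborel)))"
  proof -
    have "(\<integral>x. (\<Sum>i\<in>I. c i * (u i x * \<psi> x)) \<partial>lborel) = (\<Sum>i\<in>I. c i * (\<integral>x. u i x * \<psi> x \<partial>lborel))"
      by (subst Bochner_Integration.integral_sum) (use int_u in auto)
    moreover have "(\<integral>x. (\<Sum>i\<in>I. c i * (q i x \<bullet> g x)) \<partial>lborel) = (\<Sum>i\<in>I. c i * (\<integral>x. q i x \<bullet> g x \<partial>lborel))"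
      by (subst Bochner_Integration.integral_sum) (use int_q in auto)
    ultimately show ?thesis
      unfolding ru rq by (simp add: distrib_left sum.distrib sum_distrib_left mult.left_commute)
  qed
  also have "\<dots> = 0" using eq by simp
  moreover have "integrable lborel (\<lambda>x. \<Sum>i\<in>I. c i * (u i x * \<psi> x))"
    "integrable lborel (\<lambda>x. \<Sum>i\<in>I. c i * (q i x \<bullet> g x))"
    using int_u int_q by (auto intro!: Bochner_Integration.integrable_sum)
  ultimately show "integrable lborel (\<lambda>x. (\<Sum>i\<in>I. c i * u i x) * \<psi> x) \<and>
      integrable lborel (\<lambda>x. (\<Sum>i\<in>I. c i *\<^sub>R q i x) \<bullet> g x) \<and>
      integrable lborel (\<lambda>x. 0 \<bullet> g x) \<and>
      1 / T * (\<integral>x. (\<Sum>i\<in>I. c i * u i x) * \<psi> x \<partial>lborel) + (\<integral>x. (\<Sum>i\<in>I. c i *\<^sub>R q i x) \<bullet> g x \<partial>lborel)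
        = - (\<integral>x. 0 \<bullet> g x \<partial>lborel)"
    unfolding ru rq by simp
qed

lemma weak_sol_split_flux:
  fixes u :: "real^'n \<Rightarrow> real" and q f :: "real^'n \<Rightarrow> real^'n"
  assumes sol: "weak_sol T u (\<lambda>x. q x + f x) (\<lambda>x. 0)"
    and int_f: "\<And>\<psi> g. test_fn \<psi> g \<Longrightarrow> integrable lborel (\<lambda>x. f x \<bullet> g x)"
  shows "weak_sol T u q f"
  unfolding weak_sol_def
proof (intro allI impI)
  fix \<psi> :: "real^'n \<Rightarrow> real" and g :: "real^'n \<Rightarrow> real^'n"
  assume tf: "test_fn \<psi> g"
  then have "integrable lborel (\<lambda>x. q x \<bullet> g x + f x \<bullet> g x)"
    and eq: "1 / T * (\<integral>x. u x * \<psi> x \<partial>lborel) + (\<integral>x. q x \<bullet> g x + f x \<bullet> g x \<partial>lborel) = 0"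
    and "integrable lborel (\<lambda>x. u x * \<psi> x)"
    using sol unfolding weak_sol_def by (auto simp: inner_add_left)
  moreover note int_f[OF tf]
  moreover from calculation have "integrable lborel (\<lambda>x. q x \<bullet> g x)"
    using Bochner_Integration.integrable_diff[of lborel "\<lambda>x. q x \<bullet> g x + f x \<bullet> g x" "\<lambda>x. f x \<bullet> g x"]
    by simp
  ultimately show "integrable lborel (\<lambda>x. u x * \<psi> x) \<and> integrable lborel (\<lambda>x. q x \<bullet> g x) \<and>
      integrable lborel (\<lambda>x. f x \<bullet> g x) \<and>
      1 / T * (\<integral>x. u x * \<psi> x \<partial>lborel) + (\<integral>x. q x \<bullet> g x \<partial>lborel) = - (\<integral>x. f x \<bullet> g x \<partial>lborel)"
    using eq by simp
qed

lemma delta_eq_fin_diff: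
  assumes "finite P" "P \<noteq> {}"
  shows "delta phi \<xi> P H x = fin_diff (\<lambda>E. phi E x) P H"
proof -
  have "delta phi \<xi> P H x = fin_diff (\<lambda>E. phi E x + \<xi> \<bullet> x) P H"
    unfolding delta_def fin_diff_def by simp
  then show ?thesis using assms by (simp add: fin_diff_add fin_diff_const)
qed

lemma gdelta_eq_fin_diff: "gdelta Dphi \<xi> P Q x = fin_diff (\<lambda>E. Dphi E x + \<xi>) P Q"
  unfolding gdelta_def fin_diff_def by simp

lemma locally_integrable_gdelta:
  assumes "\<And>E. H1_uloc (phi E) (Dphi E)"
  shows "locally_integrable (gdelta Dphi \<xi> P Q)"
  unfolding gdelta_def using assms
  by (intro locally_integrable_sum locally_integrable_add locally_integrable_const)
    (rule H1_uloc_locally_integrable)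

lemma flux_fin_diff_expansion:
  assumes "finite F" "finite G" "F \<inter> G = {}" "F \<inter> H = {}" "G \<inter> H = {}"
  shows "fin_diff (\<lambda>E. AU A A' J E x *v (Dphi E x + \<xi>)) (F \<union> G) H
    = AU A A' J (F \<union> H) x *v gdelta Dphi \<xi> (F \<union> G) H x
      + (\<Sum>S\<in>Pow F. \<Sum>U\<in>Pow G. (-1) ^ (card S + card U + 1) *\<^sub>R
          (Csep A A' J (S \<union> U) (H \<union> (F - S)) x *v gdelta Dphi \<xi> ((F - S) \<union> (G - U)) (U \<union> H) x))"
proof -
  define K where "K = {n. x \<in> J n}"
  define v where "v E = Dphi E x + \<xi>" for E
  define D where "D = A' x - A x"
  have AU: "AU A A' J E x *v y = A x *v y + D *v (if E \<inter> K \<noteq> {} then y else 0)" for E y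
    unfolding AU_def CU_def JU_def K_def D_def by (auto simp: matrix_vector_mult_add_rdistrib)
  have Csep: "Csep A A' J E L x *v y = D *v (if E \<noteq> {} \<and> E \<subseteq> K \<and> L \<inter> K = {} then y else 0)" for E L y
    unfolding Csep_def Jsep_def K_def D_def by auto
  have lin: "linear ((*v) M)" for M :: "real^'n^'n" by (rule matrix_vector_mul_linear)
  show ?thesis
    unfolding AU Csep gdelta_eq_fin_diff v_def[symmetric] fin_diff_add
    unfolding fin_diff_linear[OF lin] fin_diff_indicator_expansion[OF assms]
    by (simp add: linear_add[OF lin] linear_neg[OF lin] linear_sum[OF lin] linear_scale[OF lin] add.assoc)
qed

lemma weak_sol_delta:
  fixes A A' :: "real^'n \<Rightarrow> real^'n^'n"
    and phi :: "nat set \<Rightarrow> real^'n \<Rightarrow> real" and Dphi :: "nat set \<Rightarrow> real^'n \<Rightarrow> real^'n"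
  assumes ellA: "sym_unif_elliptic A" and ellA': "sym_unif_elliptic A'"
    and J_borel: "\<And>n. J n \<in> sets borel"
    and phi_class: "\<And>E. H1_uloc (phi E) (Dphi E)"
    and phi_eq: "\<And>E. weak_sol T (phi E) (\<lambda>x. AU A A' J E x *v (Dphi E x + \<xi>)) (\<lambda>x. 0)"
    and fin: "finite F" "finite G" and disj: "F \<inter> G = {}" "F \<inter> H = {}" "G \<inter> H = {}"
    and ne: "F \<union> G \<noteq> {}"
  shows "weak_sol T (delta phi \<xi> (F \<union> G) H)
    (\<lambda>x. AU A A' J (F \<union> H) x *v gdelta Dphi \<xi> (F \<union> G) H x)
    (\<lambda>x. \<Sum>S\<in>Pow F. \<Sum>U\<in>Pow G. (-1) ^ (card S + card U + 1) *\<^sub>R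
      (Csep A A' J (S \<union> U) (H \<union> (F - S)) x *v gdelta Dphi \<xi> ((F - S) \<union> (G - U)) (U \<union> H) x))"
proof -
  have "weak_sol T (\<lambda>x. fin_diff (\<lambda>E. phi E x) (F \<union> G) H)
      (\<lambda>x. fin_diff (\<lambda>E. AU A A' J E x *v (Dphi E x + \<xi>)) (F \<union> G) H) (\<lambda>x. 0)"
    unfolding fin_diff_def real_scaleR_def using fin phi_eq by (intro weak_sol_lincomb) auto
  moreover have "delta phi \<xi> (F \<union> G) H = (\<lambda>x. fin_diff (\<lambda>E. phi E x) (F \<union> G) H)"
    using fin ne by (simp add: fun_eq_iff delta_eq_fin_diff)
  ultimately have "weak_sol T (delta phi \<xi> (F \<union> G) H)
    (\<lambda>x. AU A A' J (F \<union> H) x *v gdelta Dphi \<xi> (F \<union> G) H x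
      + (\<Sum>S\<in>Pow F. \<Sum>U\<in>Pow G. (-1) ^ (card S + card U + 1) *\<^sub>R
        (Csep A A' J (S \<union> U) (H \<union> (F - S)) x *v gdelta Dphi \<xi> ((F - S) \<union> (G - U)) (U \<union> H) x)))
    (\<lambda>x. 0)"
    by (simp add: flux_fin_diff_expansion[OF fin disj])
  then show ?thesis
  proof (rule weak_sol_split_flux)
    fix \<psi> :: "real^'n \<Rightarrow> real" and g :: "real^'n \<Rightarrow> real^'n"
    assume "test_fn \<psi> g"
    then have "integrable lborel (\<lambda>x. (Csep A A' J (S \<union> U) (H \<union> (F - S)) x
        *v gdelta Dphi \<xi> ((F - S) \<union> (G - U)) (U \<union> H) x) \<bullet> g x)" for S U
      by (intro integrable_flux_test bounded_coeff_Csep[OF ellA ellA' J_borel]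
          locally_integrable_gdelta[OF phi_class])
    then show "integrable lborel (\<lambda>x. (\<Sum>S\<in>Pow F. \<Sum>U\<in>Pow G. (-1) ^ (card S + card U + 1) *\<^sub>R
        (Csep A A' J (S \<union> U) (H \<union> (F - S)) x *v gdelta Dphi \<xi> ((F - S) \<union> (G - U)) (U \<union> H) x)) \<bullet> g x)"
      by (simp add: inner_sum_left)
  qed
qed

theorem lemma4p1:
  fixes A A' :: "real^'n \<Rightarrow> real^'n^'n"
    and J :: "nat \<Rightarrow> (real^'n) set"
    and \<Gamma> :: nat
    and T :: real and \<xi> :: "real^'n"
    and phi :: "nat set \<Rightarrow> real^'n \<Rightarrow> real"
    and Dphi :: "nat set \<Rightarrow> real^'n \<Rightarrow> real^'n"
  assumes ellA: "sym_unif_elliptic A" and ellA': "sym_unif_elliptic A'"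
    and J_borel: "\<And>n. J n \<in> sets borel" and J_bdd: "\<And>n. bounded (J n)"
    and J_overlap: "\<And>x. finite {n. x \<in> J n} \<and> card {n. x \<in> J n} \<le> \<Gamma>"
    and T_pos: "T > 0" and xi_unit: "norm \<xi> = 1"
    and phi_class: "\<And>E. H1_uloc (phi E) (Dphi E)"
    and phi_eq: "\<And>E. weak_sol T (phi E) (\<lambda>x. AU A A' J E x *v (Dphi E x + \<xi>)) (\<lambda>x. 0)"
  shows
   "(\<forall>F H. finite F \<and> F \<noteq> {} \<and> F \<inter> H = {} \<longrightarrow>
       weak_sol T (delta phi \<xi> F H)
         (\<lambda>x. AU A A' J (F \<union> H) x *v gdelta Dphi \<xi> F H x)
         (\<lambda>x. \<Sum>S\<in>Pow F. ((-1) ^ (card S + 1)) *\<^sub>R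
                (Csep A A' J S (H \<union> (F - S)) x *v gdelta Dphi \<xi> (F - S) H x))
     \<and> weak_sol T (delta phi \<xi> F H)
         (\<lambda>x. AU A A' J H x *v gdelta Dphi \<xi> F H x)
         (\<lambda>x. \<Sum>S\<in>Pow F. ((-1) ^ (card S + 1)) *\<^sub>R
                (Csep A A' J S H x *v gdelta Dphi \<xi> (F - S) (S \<union> H) x)))
    \<and> (\<forall>F G H. finite F \<and> finite G \<and> F \<inter> G = {} \<and> F \<inter> H = {} \<and> G \<inter> H = {} \<and> F \<union> G \<noteq> {} \<longrightarrow>
       weak_sol T (delta phi \<xi> (F \<union> G) H)
         (\<lambda>x. AU A A' J (F \<union> H) x *v gdelta Dphi \<xi> (F \<union> G) H x)
         (\<lambda>x. \<Sum>S\<in>Pow F. \<Sum>U\<in>Pow G. ((-1) ^ (card S + card U + 1)) *\<^sub>R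
                (Csep A A' J (S \<union> U) (H \<union> (F - S)) x *v
                   gdelta Dphi \<xi> ((F - S) \<union> (G - U)) (U \<union> H) x)))"
proof -
  note general = weak_sol_delta[OF ellA ellA' J_borel phi_class phi_eq]
  show ?thesis
    using general[of _ "{}"] general[of "{}"] general by auto
qed

end
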